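(* For every integer $\nu\ge0$, $$\operatorname{sech}^3(D/2)\,0^{[2\nu]}=2\tanh(D/2)\,0^{[2\nu+1]}=4\cosh(D/2)\,0^{[2\nu+2]},$$ and consequently $$4\sum_{k=1}^{\nu+1}2^{-2k}\,t(2\nu+2,2k)=\frac{(2\nu)!}{2^{2\nu}}\binom{-3/2}{\nu}.$$
   Context: Central factorials: $x^{[0]}=1$, $x^{[n]}=x\prod_{j=1}^{n-1}(x+\tfrac n2-j)$ for $n\ge1$; $t(n,k)$ is defined by $x^{[n]}=\sum_k t(n,k)x^k$. For a power series $h(D)=\sum_k h_kD^k$ (here the Taylor series at $0$ of the indicated functions of $D$), $h(D)\,0^{[n]}:=\sum_k h_k\,k!\,t(n,k)$. *)

theory Defs
  imports "HOL-Analysis.Analysis" "HOL-Computational_Algebra.Polynomial"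
begin

definition central_fact_poly :: "nat \<Rightarrow> real poly" where
  "central_fact_poly n =
     (if n = 0 then 1
      else [:0, 1:] * (\<Prod>j\<in>{1..n-1}. [: real n / 2 - real j, 1 :]))"

definition cf_t :: "nat \<Rightarrow> nat \<Rightarrow> real" where
  "cf_t n k = coeff (central_fact_poly n) k"

text \<open>h(D) 0^[n] = sum_k h_k k! t(n,k), where h_k k! is the k-th derivative at 0
  of the function h (Taylor coefficients at 0). Since t(n,k)=0 for k>n the sum is finite.\<close>
definition op_zero :: "(real \<Rightarrow> real) \<Rightarrow> nat \<Rightarrow> real" where
  "op_zero h n = (\<Sum>k\<le>n. (deriv ^^ k) h 0 * cf_t n k)"

end

theory Submission
  imports Defs
begin

text \<open>The central factorials satisfy x^[n+2] = (x^2 - n^2/4) x^[n], hence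
  h(D) 0^[n+2] = h''(D) 0^[n] - n^2/4 h(D) 0^[n].  The functions E_b = cosh(x/2)^b and
  O_b = sinh(x/2) cosh(x/2)^b are closed under differentiation, with
  E_b'' = b^2/4 E_b - b(b-1)/4 E_(b-2) and O_b'' = (b+1)^2/4 O_b - b(b-1)/4 O_(b-2), so the
  recurrence gives by induction on m
  E_b(D) 0^[2m] = (2m)!/4^m binom(b/2, m) and O_b(D) 0^[2m+1] = (2m+1)!/(2 4^m) binom(b/2, m).
  For sech^3 = E_(-3), tanh = O_(-1) and cosh = E_1 (at x/2) the three values are then the same
  multiple of binom(-1/2, nu).  Finally, the derivatives of cosh(x/2) at 0 are 4^(-k) in order 2k
  and vanish in odd order, which turns cosh(D/2) 0^[2 nu+2] into the sum over t(2 nu+2, 2k).\<close>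

definition smooth :: "(real \<Rightarrow> real) \<Rightarrow> bool" where
  "smooth f \<longleftrightarrow> (\<forall>k x. (deriv ^^ k) f field_differentiable (at x))"

lemma deriv_lincomb:
  fixes f g :: "real \<Rightarrow> real"
  assumes "f field_differentiable (at x)" "g field_differentiable (at x)"
  shows "deriv (\<lambda>x. a * f x + c * g x) x = a * deriv f x + c * deriv g x"
  using assms by (simp add: field_differentiable_mult)

lemma higher_deriv_lincomb:
  fixes f g :: "real \<Rightarrow> real"
  assumes "\<forall>j<k. \<forall>x. (deriv ^^ j) f field_differentiable (at x) \<and> (deriv ^^ j) g field_differentiable (at x)"
  shows "(deriv ^^ k) (\<lambda>x. a * f x + c * g x) = (\<lambda>x. a * (deriv ^^ k) f x + c * (deriv ^^ k) g x)"
  using assms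
proof (induction k arbitrary: f g)
  case 0
  then show ?case by simp
next
  case (Suc k)
  have "deriv (\<lambda>x. a * f x + c * g x) = (\<lambda>x. a * deriv f x + c * deriv g x)"
    using Suc.prems by (intro ext deriv_lincomb) auto
  moreover have "(deriv ^^ k) (\<lambda>x. a * deriv f x + c * deriv g x)
      = (\<lambda>x. a * (deriv ^^ k) (deriv f) x + c * (deriv ^^ k) (deriv g) x)"
    using Suc.prems by (intro Suc.IH) (metis funpow_Suc_right comp_apply Suc_mono)
  ultimately show ?case by (simp add: funpow_Suc_right del: funpow.simps)
qed

lemma higher_deriv_cmult:
  fixes f :: "real \<Rightarrow> real"
  assumes "\<forall>j<k. \<forall>x. (deriv ^^ j) f field_differentiable (at x)"
  shows "(deriv ^^ k) (\<lambda>x. a * f x) = (\<lambda>x. a * (deriv ^^ k) f x)"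
  using higher_deriv_lincomb[of k f f a 0] assms by simp

lemma op_zero_lincomb:
  assumes "smooth f" "smooth g"
  shows "op_zero (\<lambda>x. a * f x + c * g x) n = a * op_zero f n + c * op_zero g n"
  using assms unfolding op_zero_def smooth_def
  by (simp add: higher_deriv_lincomb sum_distrib_left sum.distrib algebra_simps)

lemma central_fact_poly_Suc_Suc:
  "central_fact_poly (n + 2) = [:- (real n ^ 2 / 4), 0, 1:] * central_fact_poly n"
proof (cases "n = 0")
  case True
  then show ?thesis by (simp add: central_fact_poly_def)
next
  case False
  let ?f = "\<lambda>j::nat. [:real (n + 2) / 2 - real j, 1:]"
  have split: "{1..n + 1} = insert 1 (insert (n + 1) {1 + 1..(n - 1) + 1})"
    using False by auto
  have "(\<Prod>j\<in>{1..n + 1}. ?f j) = ?f 1 * (?f (n + 1) * (\<Prod>j\<in>{1 + 1..(n - 1) + 1}. ?f j))"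
    unfolding split using False by (subst prod.insert; auto)+
  also have "\<dots> = ?f 1 * ?f (n + 1) * (\<Prod>j\<in>{1 + 1..(n - 1) + 1}. ?f j)"
    by (rule mult.assoc[symmetric])
  also have "?f 1 * ?f (n + 1) = [:- (real n ^ 2 / 4), 0, 1:]"
    by (simp add: field_simps power2_eq_square)
  also have "(\<Prod>j\<in>{1 + 1..(n - 1) + 1}. ?f j) = (\<Prod>j\<in>{1..n - 1}. [:real n / 2 - real j, 1:])"
    unfolding prod.shift_bounds_cl_nat_ivl by (intro prod.cong) (auto simp: field_simps)
  finally show ?thesis
    using False by (simp add: central_fact_poly_def mult_ac)
qed

lemma cf_t_Suc_Suc:
  "cf_t (n + 2) k = - (real n ^ 2 / 4) * cf_t n k + (if 2 \<le> k then cf_t n (k - 2) else 0)"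
  unfolding cf_t_def central_fact_poly_Suc_Suc
  by (cases k; cases "k - 1") (simp_all add: coeff_pCons)

lemma degree_central_fact_poly: "degree (central_fact_poly n) \<le> n"
proof (induction n rule: less_induct)
  case (less n)
  show ?case
  proof (cases "n < 2")
    case True
    then show ?thesis by (auto simp: central_fact_poly_def less_2_cases_iff)
  next
    case False
    then obtain m where m: "n = m + 2" by (metis add.commute le_add_diff_inverse not_less)
    have "degree (central_fact_poly n) \<le> degree [:- (real m ^ 2 / 4), 0, 1:] + degree (central_fact_poly m)"
      unfolding m central_fact_poly_Suc_Suc by (rule degree_mult_le)
    also have "\<dots> \<le> n" using less[of m] m by simp
    finally show ?thesis .
  qed
qed

lemma cf_t_eq_0: "n < k \<Longrightarrow> cf_t n k = 0"
  unfolding cf_t_def using degree_central_fact_poly[of n] by (simp add: coeff_eq_0)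

lemma cf_t_0: "0 < n \<Longrightarrow> cf_t n 0 = 0"
  by (simp add: cf_t_def central_fact_poly_def)

lemma op_zero_atMost: "n \<le> N \<Longrightarrow> op_zero h n = (\<Sum>k\<le>N. (deriv ^^ k) h 0 * cf_t n k)"
  unfolding op_zero_def by (intro sum.mono_neutral_left) (auto simp: cf_t_eq_0)

lemma op_zero_Suc_Suc:
  "op_zero h (n + 2) = op_zero (deriv (deriv h)) n - real n ^ 2 / 4 * op_zero h n"
proof -
  let ?d = "\<lambda>k. (deriv ^^ k) h 0"
  have "op_zero h (n + 2) = (\<Sum>k\<le>n + 2. ?d k * (- (real n ^ 2 / 4) * cf_t n k))
      + (\<Sum>k\<le>n + 2. ?d k * (if 2 \<le> k then cf_t n (k - 2) else 0))"
    by (simp only: op_zero_def cf_t_Suc_Suc distrib_left sum.distrib)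
  also have "(\<Sum>k\<le>n + 2. ?d k * (- (real n ^ 2 / 4) * cf_t n k)) = - (real n ^ 2 / 4) * op_zero h n"
    unfolding op_zero_atMost[of n "n + 2", OF le_add1] sum_distrib_left by (simp add: mult_ac)
  also have "(\<Sum>k\<le>n + 2. ?d k * (if 2 \<le> k then cf_t n (k - 2) else 0)) = (\<Sum>k\<le>n. ?d (k + 2) * cf_t n k)"
    by (simp only: add_2_eq_Suc' sum.atMost_Suc_shift) simp
  also have "\<dots> = op_zero (deriv (deriv h)) n"
    by (simp add: op_zero_def funpow_Suc_right del: funpow.simps)
  finally show ?thesis by simp
qed

lemma op_zero_0: "op_zero h 0 = h 0"
  by (simp add: op_zero_def cf_t_def central_fact_poly_def)

lemma op_zero_1: "op_zero h 1 = deriv h 0"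
  by (simp add: op_zero_def cf_t_def central_fact_poly_def)

definition cosh_half_powr :: "real \<Rightarrow> real \<Rightarrow> real" where
  "cosh_half_powr b x = cosh (x / 2) powr b"

definition sinh_cosh_half_powr :: "real \<Rightarrow> real \<Rightarrow> real" where
  "sinh_cosh_half_powr b x = sinh (x / 2) * cosh (x / 2) powr b"

lemma has_real_derivative_cosh_half_powr:
  "(cosh_half_powr b has_real_derivative b / 2 * sinh_cosh_half_powr (b - 1) x) (at x)"
  unfolding cosh_half_powr_def[abs_def] sinh_cosh_half_powr_def
  by (auto intro!: derivative_eq_intros)

lemma has_real_derivative_sinh_cosh_half_powr:
  "(sinh_cosh_half_powr b has_real_derivative
     (b + 1) / 2 * cosh_half_powr (b + 1) x - b / 2 * cosh_half_powr (b - 1) x) (at x)"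
proof -
  let ?C = "cosh (x / 2)" and ?S = "sinh (x / 2)"
  have C: "?C > 0" by simp
  have D: "(sinh_cosh_half_powr b has_real_derivative
      ?C / 2 * ?C powr b + b / 2 * (?S ^ 2 * ?C powr (b - 1))) (at x)"
    unfolding sinh_cosh_half_powr_def[abs_def]
    by (auto intro!: derivative_eq_intros simp: power2_eq_square)
  have "?C / 2 * ?C powr b = ?C powr (b + 1) / 2"
    using C by (simp add: powr_add)
  moreover have "?S ^ 2 * ?C powr (b - 1) = ?C powr (b + 1) - ?C powr (b - 1)"
    using C by (simp add: sinh_square_eq left_diff_distrib add.commute powr_add[symmetric] flip: powr_numeral)
  ultimately have "?C / 2 * ?C powr b + b / 2 * (?S ^ 2 * ?C powr (b - 1))
      = (b + 1) / 2 * cosh_half_powr (b + 1) x - b / 2 * cosh_half_powr (b - 1) x"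
    unfolding cosh_half_powr_def by (simp only:) (simp add: algebra_simps add_divide_distrib)
  with D show ?thesis by simp
qed

lemma deriv_cosh_half_powr:
  "deriv (cosh_half_powr b) = (\<lambda>x. b / 2 * sinh_cosh_half_powr (b - 1) x)"
  using has_real_derivative_cosh_half_powr DERIV_imp_deriv by blast

lemma deriv_sinh_cosh_half_powr:
  "deriv (sinh_cosh_half_powr b)
     = (\<lambda>x. (b + 1) / 2 * cosh_half_powr (b + 1) x + (- b / 2) * cosh_half_powr (b - 1) x)"
  using has_real_derivative_sinh_cosh_half_powr DERIV_imp_deriv by fastforce

lemma higher_deriv_cosh_half_powr_differentiable:
  "(deriv ^^ k) (cosh_half_powr b) field_differentiable (at x)
   \<and> (deriv ^^ k) (sinh_cosh_half_powr b) field_differentiable (at x)"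
proof (induction k arbitrary: b x rule: less_induct)
  case (less k)
  show ?case
  proof (cases k)
    case 0
    then show ?thesis
      using has_real_derivative_cosh_half_powr[of b x] has_real_derivative_sinh_cosh_half_powr[of b x]
      unfolding field_differentiable_def by auto
  next
    case (Suc m)
    have lower: "\<forall>j<m. \<forall>x. (deriv ^^ j) (cosh_half_powr c) field_differentiable (at x)
        \<and> (deriv ^^ j) (sinh_cosh_half_powr c) field_differentiable (at x)" for c
      using less Suc by simp
    have "(deriv ^^ k) (cosh_half_powr b) = (deriv ^^ m) (\<lambda>x. b / 2 * sinh_cosh_half_powr (b - 1) x)"
      by (simp add: Suc funpow_Suc_right deriv_cosh_half_powr del: funpow.simps)
    also have "\<dots> = (\<lambda>x. b / 2 * (deriv ^^ m) (sinh_cosh_half_powr (b - 1)) x)"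
      using lower by (intro higher_deriv_cmult) blast
    finally have E: "(deriv ^^ k) (cosh_half_powr b) = \<dots>" .
    have "(deriv ^^ k) (sinh_cosh_half_powr b) = (deriv ^^ m) (\<lambda>x. (b + 1) / 2 * cosh_half_powr (b + 1) x
        + (- b / 2) * cosh_half_powr (b - 1) x)"
      by (simp only: Suc funpow_Suc_right comp_apply deriv_sinh_cosh_half_powr)
    also have "\<dots> = (\<lambda>x. (b + 1) / 2 * (deriv ^^ m) (cosh_half_powr (b + 1)) x
        + (- b / 2) * (deriv ^^ m) (cosh_half_powr (b - 1)) x)"
      using lower by (intro higher_deriv_lincomb) blast
    finally have O: "(deriv ^^ k) (sinh_cosh_half_powr b) = \<dots>" .
    show ?thesis
      unfolding E O using less[of m] Suc
      by (intro conjI field_differentiable_add field_differentiable_mult field_differentiable_const) auto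
  qed
qed

lemma smooth_cosh_half_powr: "smooth (cosh_half_powr b)"
  using higher_deriv_cosh_half_powr_differentiable smooth_def by blast

lemma smooth_sinh_cosh_half_powr: "smooth (sinh_cosh_half_powr b)"
  using higher_deriv_cosh_half_powr_differentiable smooth_def by blast

lemma deriv2_cosh_half_powr:
  "deriv (deriv (cosh_half_powr b))
     = (\<lambda>x. b ^ 2 / 4 * cosh_half_powr b x + (- (b * (b - 1) / 4)) * cosh_half_powr (b - 2) x)"
proof
  fix x
  have "deriv (deriv (cosh_half_powr b)) x = b / 2 * deriv (sinh_cosh_half_powr (b - 1)) x"
    unfolding deriv_cosh_half_powr
    using higher_deriv_cosh_half_powr_differentiable[of 0 "b - 1" x] by (intro deriv_cmult) simp
  then show "deriv (deriv (cosh_half_powr b)) x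
      = b ^ 2 / 4 * cosh_half_powr b x + (- (b * (b - 1) / 4)) * cosh_half_powr (b - 2) x"
    by (simp add: deriv_sinh_cosh_half_powr power2_eq_square field_simps)
qed

lemma deriv2_sinh_cosh_half_powr:
  "deriv (deriv (sinh_cosh_half_powr b))
     = (\<lambda>x. (b + 1) ^ 2 / 4 * sinh_cosh_half_powr b x + (- (b * (b - 1) / 4)) * sinh_cosh_half_powr (b - 2) x)"
proof
  fix x
  have "deriv (deriv (sinh_cosh_half_powr b)) x
      = (b + 1) / 2 * deriv (cosh_half_powr (b + 1)) x + (- b / 2) * deriv (cosh_half_powr (b - 1)) x"
    unfolding deriv_sinh_cosh_half_powr using higher_deriv_cosh_half_powr_differentiable[of 0 _ x]
    by (intro deriv_lincomb) simp_all
  then show "deriv (deriv (sinh_cosh_half_powr b)) x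
      = (b + 1) ^ 2 / 4 * sinh_cosh_half_powr b x + (- (b * (b - 1) / 4)) * sinh_cosh_half_powr (b - 2) x"
    by (simp add: deriv_cosh_half_powr power2_eq_square field_simps)
qed

lemma op_zero_cosh_half_powr_Suc_Suc:
  "op_zero (cosh_half_powr b) (n + 2)
     = (b ^ 2 - real n ^ 2) / 4 * op_zero (cosh_half_powr b) n
       - b * (b - 1) / 4 * op_zero (cosh_half_powr (b - 2)) n"
  unfolding op_zero_Suc_Suc deriv2_cosh_half_powr op_zero_lincomb[OF smooth_cosh_half_powr smooth_cosh_half_powr]
  by (simp add: algebra_simps diff_divide_distrib)

lemma op_zero_sinh_cosh_half_powr_Suc_Suc:
  "op_zero (sinh_cosh_half_powr b) (n + 2)
     = ((b + 1) ^ 2 - real n ^ 2) / 4 * op_zero (sinh_cosh_half_powr b) n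
       - b * (b - 1) / 4 * op_zero (sinh_cosh_half_powr (b - 2)) n"
  unfolding op_zero_Suc_Suc deriv2_sinh_cosh_half_powr
    op_zero_lincomb[OF smooth_sinh_cosh_half_powr smooth_sinh_cosh_half_powr]
  by (simp add: algebra_simps diff_divide_distrib)

lemma gbinomial_Suc_mult:
  fixes a :: "'a::field_char_0"
  shows "of_nat (Suc k) * (a gchoose Suc k) = (a - of_nat k) * (a gchoose k)"
  using gbinomial_mult_1[of a k] by (simp add: algebra_simps)

lemma gbinomial_shifted_square_step:
  fixes r d :: real
  shows "((r + d) ^ 2 - (real m + d) ^ 2) * (r gchoose m) - r * (2 * r - 1) / 2 * ((r - 1) gchoose m)
           = (2 * real m + 2) * (2 * real m + 4 * d + 1) / 4 * (r gchoose Suc m)"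
proof -
  let ?X = "r gchoose m"
  have "((r + d) ^ 2 - (real m + d) ^ 2) * ?X - r * (2 * r - 1) / 2 * ((r - 1) gchoose m)
      = ((r + d) ^ 2 - (real m + d) ^ 2) * ?X - (2 * r - 1) / 2 * (r * ((r - 1) gchoose m))"
    by simp
  also have "r * ((r - 1) gchoose m) = (r - real m) * ?X"
    using gbinomial_absorb_comp[of r m] by simp
  also have "((r + d) ^ 2 - (real m + d) ^ 2) * ?X - (2 * r - 1) / 2 * ((r - real m) * ?X)
      = (2 * real m + 4 * d + 1) / 2 * ((r - real m) * ?X)"
    by (simp add: power2_eq_square field_simps)
  also have "(r - real m) * ?X = (real m + 1) * (r gchoose Suc m)"
    using gbinomial_Suc_mult[of m r] by (simp add: add.commute)
  finally show ?thesis by (simp add: field_simps)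
qed

lemma op_zero_cosh_half_powr_even:
  "op_zero (cosh_half_powr b) (2 * m) = fact (2 * m) / 4 ^ m * ((b / 2) gchoose m)"
proof (induction m arbitrary: b)
  case 0
  then show ?case by (simp add: op_zero_0 cosh_half_powr_def)
next
  case (Suc m)
  let ?F = "fact (2 * m) / 4 ^ m :: real"
  have "op_zero (cosh_half_powr b) (2 * m + 2)
      = (b ^ 2 - real (2 * m) ^ 2) / 4 * (?F * ((b / 2) gchoose m))
        - b * (b - 1) / 4 * (?F * (((b - 2) / 2) gchoose m))"
    unfolding op_zero_cosh_half_powr_Suc_Suc Suc.IH ..
  also have "\<dots> = ?F * (((b / 2) ^ 2 - real m ^ 2) * ((b / 2) gchoose m)
      - b / 2 * (2 * (b / 2) - 1) / 2 * ((b / 2 - 1) gchoose m))"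
    by (simp add: diff_divide_distrib power2_eq_square algebra_simps)
  also have "\<dots> = ?F * ((2 * real m + 2) * (2 * real m + 1) / 4 * ((b / 2) gchoose Suc m))"
    by (simp only: gbinomial_shifted_square_step[of "b / 2" 0 m, unfolded add_0_right mult_zero_right])
  also have "\<dots> = fact (2 * Suc m) / 4 ^ Suc m * ((b / 2) gchoose Suc m)"
    by (simp add: field_simps)
  finally show ?case by simp
qed

lemma op_zero_sinh_cosh_half_powr_odd:
  "op_zero (sinh_cosh_half_powr b) (2 * m + 1) = fact (2 * m + 1) / (2 * 4 ^ m) * ((b / 2) gchoose m)"
proof (induction m arbitrary: b)
  case 0
  then show ?case
    using op_zero_1[of "sinh_cosh_half_powr b"]
    by (simp add: deriv_sinh_cosh_half_powr cosh_half_powr_def field_simps)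
next
  case (Suc m)
  let ?F = "fact (2 * m + 1) / (2 * 4 ^ m) :: real"
  have "op_zero (sinh_cosh_half_powr b) ((2 * m + 1) + 2)
      = ((b + 1) ^ 2 - real (2 * m + 1) ^ 2) / 4 * (?F * ((b / 2) gchoose m))
        - b * (b - 1) / 4 * (?F * (((b - 2) / 2) gchoose m))"
    unfolding op_zero_sinh_cosh_half_powr_Suc_Suc Suc.IH ..
  also have "\<dots> = ?F * (((b / 2 + 1 / 2) ^ 2 - (real m + 1 / 2) ^ 2) * ((b / 2) gchoose m)
      - b / 2 * (2 * (b / 2) - 1) / 2 * ((b / 2 - 1) gchoose m))"
    by (simp add: power2_eq_square field_simps)
  also have "\<dots> = ?F * ((2 * real m + 2) * (2 * real m + 3) / 4 * ((b / 2) gchoose Suc m))"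
    by (subst gbinomial_shifted_square_step) simp
  also have "\<dots> = fact (2 * Suc m + 1) / (2 * 4 ^ Suc m) * ((b / 2) gchoose Suc m)"
    by (simp add: field_simps)
  finally show ?case by simp
qed

lemma higher_deriv_cosh_half:
  "(deriv ^^ k) (\<lambda>x::real. cosh (x / 2)) = (\<lambda>x. (if even k then cosh (x / 2) else sinh (x / 2)) / 2 ^ k)"
proof (induction k)
  case 0
  then show ?case by simp
next
  case (Suc k)
  have "((\<lambda>x. (if even k then cosh (x / 2) else sinh (x / 2)) / 2 ^ k) has_real_derivative
      (if even (Suc k) then cosh (x / 2) else sinh (x / 2)) / 2 ^ Suc k) (at x)" for x
    by (cases "even k") (auto intro!: derivative_eq_intros)
  then show ?case
    using Suc.IH by (auto intro!: DERIV_imp_deriv)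
qed

lemma op_zero_cosh_half_even:
  assumes "0 < n"
  shows "op_zero (\<lambda>x. cosh (x / 2)) (2 * n) = (\<Sum>k=1..n. cf_t (2 * n) (2 * k) / 2 ^ (2 * k))"
proof -
  have evens: "{k\<in>{..2 * n}. even k} = (\<lambda>j. 2 * j) ` {..n}"
    by (auto elim!: evenE)
  have "op_zero (\<lambda>x. cosh (x / 2)) (2 * n) = (\<Sum>k\<le>2 * n. if even k then cf_t (2 * n) k / 2 ^ k else 0)"
    unfolding op_zero_def higher_deriv_cosh_half by (intro sum.cong) auto
  also have "\<dots> = (\<Sum>k\<in>(\<lambda>j. 2 * j) ` {..n}. cf_t (2 * n) k / 2 ^ k)"
    unfolding evens[symmetric] by (rule sum.inter_filter[symmetric]) simp
  also have "\<dots> = (\<Sum>j\<le>n. cf_t (2 * n) (2 * j) / 2 ^ (2 * j))"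
    by (simp add: sum.reindex inj_on_def)
  also have "\<dots> = (\<Sum>j=1..n. cf_t (2 * n) (2 * j) / 2 ^ (2 * j))"
    using assms by (simp add: atMost_atLeast0 sum.atLeast_Suc_atMost cf_t_0 flip: One_nat_def)
  finally show ?thesis .
qed

lemma gbinomial_minus_three_halves:
  "((- 3 / 2 :: real) gchoose n) = (2 * real n + 1) * ((- 1 / 2) gchoose n)"
  using gbinomial_absorb_comp[of "- 1 / 2 :: real" n] by (simp add: field_simps)

lemma gbinomial_one_half_Suc:
  "(real n + 1) * ((1 / 2 :: real) gchoose Suc n) = ((- 1 / 2) gchoose n) / 2"
proof -
  have "(real n + 1) * ((1 / 2 :: real) gchoose Suc n) = (1 / 2 - real n) * ((1 / 2) gchoose n)"
    using gbinomial_Suc_mult[of n "1 / 2 :: real"] by (simp add: add.commute)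
  also have "\<dots> = 1 / 2 * ((- 1 / 2) gchoose n)"
    using gbinomial_absorb_comp[of "1 / 2 :: real" n] by simp
  finally show ?thesis by simp
qed

lemma cosh_half_powr_minus_three: "cosh_half_powr (- 3) = (\<lambda>x. 1 / cosh (x / 2) ^ 3)"
  by (auto simp: cosh_half_powr_def powr_minus_divide powr_realpow)

lemma sinh_cosh_half_powr_minus_one: "sinh_cosh_half_powr (- 1) = (\<lambda>x. tanh (x / 2))"
  by (auto simp: sinh_cosh_half_powr_def tanh_def powr_minus_divide)

lemma cosh_half_powr_one: "cosh_half_powr 1 = (\<lambda>x. cosh (x / 2))"
  by (auto simp: cosh_half_powr_def)

theorem mainTheorem7:
  fixes \<nu> :: nat
  shows "op_zero (\<lambda>x. 1 / (cosh (x / 2)) ^ 3) (2 * \<nu>)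
           = 2 * op_zero (\<lambda>x. tanh (x / 2)) (2 * \<nu> + 1)
       \<and> 2 * op_zero (\<lambda>x. tanh (x / 2)) (2 * \<nu> + 1)
           = 4 * op_zero (\<lambda>x. cosh (x / 2)) (2 * \<nu> + 2)
       \<and> 4 * (\<Sum>k=1..\<nu>+1. cf_t (2 * \<nu> + 2) (2 * k) / 2 ^ (2 * k))
           = fact (2 * \<nu>) / 2 ^ (2 * \<nu>) * ((-3/2 :: real) gchoose \<nu>)"
proof -
  let ?c = "(2 * real \<nu> + 1) * (fact (2 * \<nu>) / 4 ^ \<nu>) * ((- 1 / 2) gchoose \<nu>)"
  have sech3: "op_zero (\<lambda>x. 1 / (cosh (x / 2)) ^ 3) (2 * \<nu>) = ?c"
    using op_zero_cosh_half_powr_even[of "- 3" \<nu>, unfolded cosh_half_powr_minus_three]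
      gbinomial_minus_three_halves[of \<nu>] by simp
  have tanh: "2 * op_zero (\<lambda>x. tanh (x / 2)) (2 * \<nu> + 1) = ?c"
    using op_zero_sinh_cosh_half_powr_odd[of "- 1" \<nu>, unfolded sinh_cosh_half_powr_minus_one] by simp
  have "4 * op_zero (\<lambda>x. cosh (x / 2)) (2 * \<nu> + 2)
      = 4 * (fact (2 * Suc \<nu>) / 4 ^ Suc \<nu> * ((1 / 2) gchoose Suc \<nu>))"
    using op_zero_cosh_half_powr_even[of 1 "Suc \<nu>", unfolded cosh_half_powr_one] by simp
  also have "\<dots> = (2 * real \<nu> + 1) * (fact (2 * \<nu>) / 4 ^ \<nu>) * (2 * ((real \<nu> + 1) * ((1 / 2) gchoose Suc \<nu>)))"
    by (simp add: field_simps)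
  finally have cosh: "4 * op_zero (\<lambda>x. cosh (x / 2)) (2 * \<nu> + 2) = ?c"
    by (simp add: gbinomial_one_half_Suc)
  have "4 * (\<Sum>k=1..\<nu>+1. cf_t (2 * \<nu> + 2) (2 * k) / 2 ^ (2 * k)) = ?c"
    using op_zero_cosh_half_even[of "\<nu> + 1"] cosh by simp
  moreover have "fact (2 * \<nu>) / 2 ^ (2 * \<nu>) * ((- 3 / 2 :: real) gchoose \<nu>) = ?c"
    using gbinomial_minus_three_halves[of \<nu>] by (simp add: power_mult)
  ultimately show ?thesis
    using sech3 tanh cosh by simp
qed

end
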